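(* Assume Condition (T) (see context) and let $(\mathbf W_t)_{t\in\mathbb Z}$, $\mathbf W_t=(W_{1,t},\dots,W_{d,t})$, be the stationary solution of $\mathbf W_t=\mathbf A_t\mathbf W_{t-1}+\mathbf B_t$. Then for every $t\in\mathbb Z$ and $i=1,\dots,d$, $$W_{i,t}=\sum_{n=0}^\infty \Pi^{(i)}_{t,t-n+1}D_{i,t-n}\quad\text{a.s.},$$ where $D_{i,t}=\sum_{j:\,i\prec j}A_{ij,t}W_{j,t-1}+B_{i,t}$ and $\Pi^{(i)}_{t,s}=A_{ii,t}A_{ii,t-1}\cdots A_{ii,s}$ for $t\ge s$, $\Pi^{(i)}_{t,s}=1$ for $t<s$.
   Context: $(\mathbf A_t,\mathbf B_t)_{t\in\mathbb Z}$ is an i.i.d. sequence of copies of $(\mathbf A,\mathbf B)$, a random $d\times d$ matrix and random vector in $\mathbb R^d$, with entries $A_{ij,t}$, $B_{i,t}$. Condition (T): (T-1) $\mathbf A\ge 0$, $\mathbf B\ge 0$ entrywise a.s.; (T-2) $\mathbb P(B_i=0)<1$ for all $i$; (T-3) $\mathbb P(A_{ij}=0)=1$ whenever $i>j$; (T-4) there exist $\alpha_1,\dots,\alpha_d>0$, pairwise distinct, with $\mathbb E A_{ii}^{\alpha_i}=1$; (T-5) $\mathbb E A_{ij}^{\alpha_i}<\infty$; (T-6) $\mathbb E B_i^{\alpha_i}<\infty$; (T-7) $\mathbb E[A_{ii}^{\alpha_i}\log^+A_{ii}]<\infty$; (T-8) the law of $\log A_{ii}$ given $\{A_{ii}>0\}$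 is non-arithmetic. Under (T) the stationary solution exists, is unique, and is given by $\mathbf W_t=\sum_{n\ge0}\mathbf A_t\cdots\mathbf A_{t-n+1}\mathbf B_{t-n}$ (empty product = identity). Write $i\prec j$ if $i\neq j$ and $\mathbb P(A_{ij}>0)>0$. *)

theory Defs
  imports "HOL-Probability.Probability"
begin

text \<open>Random matrices are functions into real^'n^'n, where the finite linearly ordered
  type 'n plays the role of the index set {1..d}.\<close>

fun mat_prod :: "(int \<Rightarrow> 'w \<Rightarrow> real^'n^'n) \<Rightarrow> int \<Rightarrow> nat \<Rightarrow> 'w \<Rightarrow> real^'n^'n" where
  "mat_prod A t 0 w = mat 1"
| "mat_prod A t (Suc n) w = mat_prod A t n w ** A (t - int n) w"

definition stat_sol :: "(int \<Rightarrow> 'w \<Rightarrow> real^'n^'n) \<Rightarrow> (int \<Rightarrow> 'w \<Rightarrow> real^'n) \<Rightarrow> int \<Rightarrow> 'w \<Rightarrow> real^'n" where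
  "stat_sol A B t w = (\<chi> i. (\<Sum>n. (mat_prod A t n w *v B (t - int n) w) $ i))"

definition diag_prod :: "(int \<Rightarrow> 'w \<Rightarrow> real^'n^'n) \<Rightarrow> 'n \<Rightarrow> int \<Rightarrow> int \<Rightarrow> 'w \<Rightarrow> real" where
  "diag_prod A i t s w = (\<Prod>k\<in>{s..t}. A k w $ i $ i)"

text \<open>i \<prec> j iff i \<noteq> j and P(A_ij > 0) > 0 (law of the generic copy A = A_0).\<close>
definition prec :: "'w measure \<Rightarrow> (int \<Rightarrow> 'w \<Rightarrow> real^'n^'n) \<Rightarrow> 'n \<Rightarrow> 'n \<Rightarrow> bool" where
  "prec M A i j \<longleftrightarrow> i \<noteq> j \<and> measure M {w \<in> space M. A 0 w $ i $ j > 0} > 0"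

definition D_term :: "'w measure \<Rightarrow> (int \<Rightarrow> 'w \<Rightarrow> real^'n^'n) \<Rightarrow> (int \<Rightarrow> 'w \<Rightarrow> real^'n)
    \<Rightarrow> (int \<Rightarrow> 'w \<Rightarrow> real^'n) \<Rightarrow> 'n \<Rightarrow> int \<Rightarrow> 'w \<Rightarrow> real" where
  "D_term M A B W i t w = (\<Sum>j\<in>{j. prec M A i j}. A t w $ i $ j * W (t - 1) w $ j) + B t w $ i"

definition non_arithmetic_log :: "'w measure \<Rightarrow> ('w \<Rightarrow> real) \<Rightarrow> bool" where
  "non_arithmetic_log M X \<longleftrightarrow>
     \<not> (\<exists>h>0. AE w in M. X w > 0 \<longrightarrow> (\<exists>k::int. ln (X w) = h * of_int k))"

end

theory Submission
  imports Defs
begin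

text \<open>Unrolling the i-th row of W_t = A_t W_(t-1) + B_t along the diagonal gives, for every N,
  W_(i,t) = sum_(n<N) Pi^(i)_(t,t-n+1) D_(i,t-n) + Pi^(i)_(t,t-N+1) W_(i,t-N), because the i.i.d.
  assumption forces A_(ij,t) = 0 a.s. for j \<noteq> i unless i \<prec> j.  For nonnegative matrices
  Pi^(i)_(t,t-N+1) is at most the (i,i) entry of A_t ... A_(t-N+1), so the remainder is dominated by
  the tail of the series defining W_(i,t), and it suffices that this series converges a.s.

  For that fix a small s > 0.  The matrix m_kl = E A_kl^s is upper triangular by (T-3), and
  m_kk < 1 because E A_kk^(alpha_k) = 1 while A_kk is not a.s. equal to 1 (non-arithmeticity).
  Hence m has a positive vector v with m v \<le> r v for some r < 1.  Subadditivity of x \<mapsto> x^s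
  together with independence gives E ((A_t ... A_(t-n+1) B_(t-n))_i)^s \<le> C r^n v_i, so the s-th
  powers of the terms have summable expectations and the series converges a.s.\<close>

section \<open>Unrolling the recursion along the diagonal\<close>

definition stat_sol_summable :: "(int \<Rightarrow> 'w \<Rightarrow> real^'n^'n) \<Rightarrow> (int \<Rightarrow> 'w \<Rightarrow> real^'n) \<Rightarrow> 'w \<Rightarrow> bool" where
  "stat_sol_summable A B w \<longleftrightarrow> (\<forall>t i. summable (\<lambda>n. (mat_prod A t n w *v B (t - int n) w) $ i))"

lemma mat_prod_Suc':
  "mat_prod A t (Suc n) w = A t w ** mat_prod A (t - 1) n w"
proof (induction n)
  case 0
  then show ?case by simp
next
  case (Suc n)
  have "mat_prod A t (Suc (Suc n)) w = (A t w ** mat_prod A (t - 1) n w) ** A (t - int (Suc n)) w"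
    using Suc by simp
  also have "\<dots> = A t w ** (mat_prod A (t - 1) n w ** A (t - 1 - int n) w)"
    by (simp add: matrix_mul_assoc algebra_simps)
  finally show ?case by simp
qed

lemma mat_prod_add:
  "mat_prod A t (m + n) w = mat_prod A t m w ** mat_prod A (t - int m) n w"
  by (induction n) (simp_all add: matrix_mul_rid matrix_mul_assoc algebra_simps)

lemma mat_prod_nonneg:
  assumes "\<And>t i j. 0 \<le> A t w $ i $ j"
  shows "0 \<le> mat_prod A t n w $ i $ j"
  using assms
  by (induction n arbitrary: i j) (auto simp: mat_def matrix_matrix_mult_def intro!: sum_nonneg)

lemma mat_prod_mult_vec_nonneg:
  assumes "\<And>t i j. 0 \<le> A t w $ i $ j" and "\<And>j. 0 \<le> v $ j"
  shows "0 \<le> (mat_prod A t n w *v v) $ i"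
  using assms by (auto simp: matrix_vector_mult_def intro!: sum_nonneg mult_nonneg_nonneg mat_prod_nonneg)

lemma diag_prod_Suc:
  "diag_prod A i t (t - int (Suc n) + 1) w = diag_prod A i t (t - int n + 1) w * A (t - int n) w $ i $ i"
proof -
  have "{t - int (Suc n) + 1..t} = insert (t - int n) {t - int n + 1..t}" by auto
  then show ?thesis by (simp add: diag_prod_def mult.commute)
qed

lemma diag_prod_nonneg:
  assumes "\<And>t. 0 \<le> A t w $ i $ i"
  shows "0 \<le> diag_prod A i t s w"
  using assms by (simp add: diag_prod_def prod_nonneg)

lemma diag_prod_le_mat_prod:
  assumes nonneg: "\<And>t i j. 0 \<le> A t w $ i $ j"
  shows "diag_prod A i t (t - int n + 1) w \<le> mat_prod A t n w $ i $ i"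
proof (induction n)
  case 0
  then show ?case by (simp add: diag_prod_def mat_def)
next
  case (Suc n)
  let ?P = "mat_prod A t n w" and ?a = "A (t - int n) w"
  have "diag_prod A i t (t - int (Suc n) + 1) w \<le> ?P $ i $ i * ?a $ i $ i"
    unfolding diag_prod_Suc using Suc nonneg by (simp add: mult_right_mono)
  also have "\<dots> \<le> (\<Sum>k\<in>UNIV. ?P $ i $ k * ?a $ k $ i)"
    by (rule member_le_sum[where f = "\<lambda>k. ?P $ i $ k * ?a $ k $ i"])
      (auto intro!: mult_nonneg_nonneg mat_prod_nonneg nonneg)
  finally show ?case by (simp add: matrix_matrix_mult_def)
qed

lemma stat_sol_recursion:
  assumes "stat_sol_summable A B w"
  shows "stat_sol A B t w = A t w *v stat_sol A B (t - 1) w + B t w"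
proof (subst vec_eq_iff, intro allI)
  fix i
  define f where "f = (\<lambda>n. (mat_prod A t n w *v B (t - int n) w) $ i)"
  define g where "g = (\<lambda>j n. (mat_prod A (t - 1) n w *v B (t - 1 - int n) w) $ j)"
  have f_Suc: "f (Suc n) = (\<Sum>j\<in>UNIV. A t w $ i $ j * g j n)" for n
  proof -
    have shift: "t - int (Suc n) = t - 1 - int n" by simp
    have "(A t w ** mat_prod A (t - 1) n w) *v B (t - 1 - int n) w
        = A t w *v (mat_prod A (t - 1) n w *v B (t - 1 - int n) w)"
      by (simp add: matrix_vector_mul_assoc)
    then show ?thesis
      unfolding f_def g_def mat_prod_Suc' shift by (simp add: matrix_vector_mult_def)
  qed
  have "summable f" and g: "\<And>j. summable (g j)"
    using assms unfolding stat_sol_summable_def f_def g_def by simp_all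
  have "stat_sol A B t w $ i = suminf f" by (simp add: stat_sol_def f_def)
  also have "\<dots> = (\<Sum>n. f (Suc n)) + f 0"
    using suminf_split_head[OF \<open>summable f\<close>] by simp
  also have "(\<Sum>n. f (Suc n)) = (\<Sum>j\<in>UNIV. \<Sum>n. A t w $ i $ j * g j n)"
    unfolding f_Suc by (rule suminf_sum) (intro summable_mult g)
  also have "\<dots> = (\<Sum>j\<in>UNIV. A t w $ i $ j * stat_sol A B (t - 1) w $ j)"
    using g by (simp add: suminf_mult stat_sol_def g_def)
  also have "f 0 = B t w $ i" by (simp add: f_def)
  finally show "stat_sol A B t w $ i = (A t w *v stat_sol A B (t - 1) w + B t w) $ i"
    by (simp add: matrix_vector_mult_def)
qed

lemma stat_sol_recursion_diag:
  assumes "stat_sol_summable A B w"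
    and zero: "\<And>t j. j \<noteq> i \<Longrightarrow> \<not> prec M A i j \<Longrightarrow> A t w $ i $ j = 0"
  shows "stat_sol A B t w $ i
    = A t w $ i $ i * stat_sol A B (t - 1) w $ i + D_term M A B (stat_sol A B) i t w"
proof -
  let ?h = "\<lambda>j. A t w $ i $ j * stat_sol A B (t - 1) w $ j"
  have "(\<Sum>j\<in>UNIV. ?h j) = (\<Sum>j\<in>insert i {j. prec M A i j}. ?h j)"
    by (rule sum.mono_neutral_right) (auto simp: zero)
  also have "\<dots> = ?h i + (\<Sum>j\<in>{j. prec M A i j}. ?h j)"
    by (simp add: prec_def)
  finally show ?thesis
    using stat_sol_recursion[OF assms(1), of t] by (simp add: vec_eq_iff matrix_vector_mult_def D_term_def)
qed

lemma stat_sol_unroll: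
  assumes "stat_sol_summable A B w"
    and "\<And>t j. j \<noteq> i \<Longrightarrow> \<not> prec M A i j \<Longrightarrow> A t w $ i $ j = 0"
  shows "stat_sol A B t w $ i
    = (\<Sum>n<N. diag_prod A i t (t - int n + 1) w * D_term M A B (stat_sol A B) i (t - int n) w)
      + diag_prod A i t (t - int N + 1) w * stat_sol A B (t - int N) w $ i"
proof (induction N)
  case 0
  then show ?case by (simp add: diag_prod_def)
next
  case (Suc N)
  have shift: "t - int N - 1 = t - int (Suc N)" by simp
  show ?case
    using Suc stat_sol_recursion_diag[OF assms, where t = "t - int N"]
    unfolding diag_prod_Suc shift by (simp add: algebra_simps)
qed

lemma diag_prod_mult_stat_sol_le_tail:
  assumes summable: "stat_sol_summable A B w"
    and A_nonneg: "\<And>t i j. 0 \<le> A t w $ i $ j" and B_nonneg: "\<And>t i. 0 \<le> B t w $ i"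
  shows "diag_prod A i t (t - int N + 1) w * stat_sol A B (t - int N) w $ i
    \<le> (\<Sum>m. (mat_prod A t (m + N) w *v B (t - int (m + N)) w) $ i)"
proof -
  define Y where "Y = (\<lambda>m. (mat_prod A (t - int N) m w *v B (t - int N - int m) w) $ i)"
  define X where "X = (\<lambda>m. (mat_prod A t m w *v B (t - int m) w) $ i)"
  have "summable Y" "summable X"
    using summable unfolding stat_sol_summable_def X_def Y_def by simp_all
  have term_le: "diag_prod A i t (t - int N + 1) w * Y m \<le> X (m + N)" for m
  proof -
    let ?P = "mat_prod A t N w" and ?v = "mat_prod A (t - int N) m w *v B (t - int N - int m) w"
    have "diag_prod A i t (t - int N + 1) w * Y m \<le> ?P $ i $ i * ?v $ i"
      unfolding Y_def
      by (intro mult_right_mono diag_prod_le_mat_prod mat_prod_mult_vec_nonneg A_nonneg B_nonneg)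
    also have "\<dots> \<le> (\<Sum>j\<in>UNIV. ?P $ i $ j * ?v $ j)"
      by (rule member_le_sum[where f = "\<lambda>j. ?P $ i $ j * ?v $ j"])
        (auto intro!: mult_nonneg_nonneg mat_prod_nonneg mat_prod_mult_vec_nonneg A_nonneg B_nonneg)
    also have "\<dots> = (?P *v ?v) $ i" by (simp add: matrix_vector_mult_def)
    also have "\<dots> = X (m + N)"
    proof -
      have "B (t - int (m + N)) w = B (t - int N - int m) w" by (simp add: algebra_simps)
      then show ?thesis
        by (simp add: X_def add.commute[of m N] mat_prod_add matrix_vector_mul_assoc)
    qed
    finally show ?thesis .
  qed
  have "diag_prod A i t (t - int N + 1) w * stat_sol A B (t - int N) w $ i
      = (\<Sum>m. diag_prod A i t (t - int N + 1) w * Y m)"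
    using \<open>summable Y\<close> by (simp add: suminf_mult stat_sol_def Y_def)
  also have "\<dots> \<le> (\<Sum>m. X (m + N))"
    using \<open>summable Y\<close> summable_ignore_initial_segment[OF \<open>summable X\<close>]
    by (intro suminf_le term_le summable_mult)
  finally show ?thesis by (simp add: X_def)
qed

lemma stat_sol_nonneg:
  assumes "stat_sol_summable A B w"
    and A_nonneg: "\<And>t i j. 0 \<le> A t w $ i $ j" and B_nonneg: "\<And>t i. 0 \<le> B t w $ i"
  shows "0 \<le> stat_sol A B t w $ i"
proof -
  have "summable (\<lambda>n. (mat_prod A t n w *v B (t - int n) w) $ i)"
    using assms(1) unfolding stat_sol_summable_def by simp
  then show ?thesis
    unfolding stat_sol_def vec_lambda_beta
    by (rule suminf_nonneg) (intro mat_prod_mult_vec_nonneg A_nonneg B_nonneg)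
qed

lemma stat_sol_eq_diag_series:
  assumes summable: "stat_sol_summable A B w"
    and A_nonneg: "\<And>t i j. 0 \<le> A t w $ i $ j" and B_nonneg: "\<And>t i. 0 \<le> B t w $ i"
    and zero: "\<And>t j. j \<noteq> i \<Longrightarrow> \<not> prec M A i j \<Longrightarrow> A t w $ i $ j = 0"
  shows "stat_sol A B t w $ i
    = (\<Sum>n. diag_prod A i t (t - int n + 1) w * D_term M A B (stat_sol A B) i (t - int n) w)"
proof -
  define R where "R N = diag_prod A i t (t - int N + 1) w * stat_sol A B (t - int N) w $ i" for N
  define X where "X = (\<lambda>m. (mat_prod A t m w *v B (t - int m) w) $ i)"
  have "summable X" using summable unfolding stat_sol_summable_def X_def by simp
  have R_nonneg: "0 \<le> R N" for N
    unfolding R_def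
    by (intro mult_nonneg_nonneg diag_prod_nonneg stat_sol_nonneg[OF summable] A_nonneg B_nonneg)
  have R_le: "R N \<le> (\<Sum>m. X (m + N))" for N
    unfolding R_def X_def by (rule diag_prod_mult_stat_sol_le_tail[OF summable A_nonneg B_nonneg])
  have "R \<longlonglongrightarrow> 0"
    by (rule tendsto_sandwich[OF _ _ tendsto_const suminf_exist_split2[OF \<open>summable X\<close>]])
      (auto intro!: always_eventually R_nonneg R_le)
  then have "(\<lambda>N. stat_sol A B t w $ i - R N) \<longlonglongrightarrow> stat_sol A B t w $ i - 0"
    by (intro tendsto_diff tendsto_const)
  moreover have "stat_sol A B t w $ i - R N
      = (\<Sum>n<N. diag_prod A i t (t - int n + 1) w * D_term M A B (stat_sol A B) i (t - int n) w)" for N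
    using stat_sol_unroll[OF summable, of i M t N] zero unfolding R_def by simp
  ultimately have "(\<lambda>n. diag_prod A i t (t - int n + 1) w * D_term M A B (stat_sol A B) i (t - int n) w)
      sums stat_sol A B t w $ i"
    unfolding sums_def by simp
  then show ?thesis by (rule sums_unique)
qed

section \<open>Fractional moments\<close>

lemma le_powr_of_le_one:
  fixes x s :: real
  assumes "0 \<le> x" "x \<le> 1" "0 < s" "s \<le> 1"
  shows "x \<le> x powr s"
proof (cases "x = 0")
  case False
  then have "x powr 1 \<le> x powr s" using assms by (intro powr_mono') auto
  then show ?thesis using False assms by simp
qed simp

lemma powr_add_le_add_powr:
  fixes a b s :: real
  assumes "0 \<le> a" "0 \<le> b" "0 < s" "s \<le> 1"
  shows "(a + b) powr s \<le> a powr s + b powr s"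
proof (cases "a + b = 0")
  case False
  let ?c = "a + b"
  have c: "0 < ?c" using False assms by simp
  have "?c powr s * (x / ?c) \<le> x powr s" if "0 \<le> x" "x \<le> ?c" for x
  proof -
    have "?c powr s * (x / ?c) \<le> ?c powr s * (x / ?c) powr s"
      using c that assms by (intro mult_left_mono le_powr_of_le_one) auto
    also have "\<dots> = x powr s" using c that by (simp add: powr_divide)
    finally show ?thesis .
  qed
  from this[of a] this[of b] have "?c powr s * (a / ?c) + ?c powr s * (b / ?c) \<le> a powr s + b powr s"
    using assms by simp
  also have "?c powr s * (a / ?c) + ?c powr s * (b / ?c) = ?c powr s"
    using c by (simp add: add_divide_distrib[symmetric] distrib_left[symmetric])
  finally show ?thesis .
qed (use assms in simp)

lemma powr_sum_le_sum_powr: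
  fixes a :: "'a \<Rightarrow> real"
  assumes "\<And>k. 0 \<le> a k" "0 < s" "s \<le> 1"
  shows "(\<Sum>k\<in>I. a k) powr s \<le> (\<Sum>k\<in>I. a k powr s)"
proof (induction I rule: infinite_finite_induct)
  case (insert x F)
  have "(\<Sum>k\<in>insert x F. a k) powr s \<le> a x powr s + (\<Sum>k\<in>F. a k) powr s"
    using insert assms by (simp add: powr_add_le_add_powr sum_nonneg)
  also have "\<dots> \<le> (\<Sum>k\<in>insert x F. a k powr s)" using insert by simp
  finally show ?case .
qed simp_all

lemma summable_of_summable_powr:
  fixes x :: "nat \<Rightarrow> real"
  assumes nonneg: "\<And>n. 0 \<le> x n" and s: "0 < s" "s \<le> 1" and summable: "summable (\<lambda>n. x n powr s)"
  shows "summable x"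
proof (rule summable_comparison_test_ev[OF _ summable])
  have "eventually (\<lambda>n. x n powr s < 1) sequentially"
    using summable_LIMSEQ_zero[OF summable] by (simp add: order_tendstoD(2))
  then show "eventually (\<lambda>n. norm (x n) \<le> x n powr s) sequentially"
  proof (rule eventually_mono)
    fix n
    assume "x n powr s < 1"
    then have "x n \<le> 1" using s by (metis ge_one_powr_ge_zero less_le_not_le linorder_le_cases)
    then show "norm (x n) \<le> x n powr s" using nonneg s by (simp add: le_powr_of_le_one)
  qed
qed

lemma AE_summable_of_summable_nn_integral_powr:
  fixes X :: "nat \<Rightarrow> 'a \<Rightarrow> real"
  assumes measurable: "\<And>n. X n \<in> borel_measurable M" and nonneg: "AE w in M. \<forall>n. 0 \<le> X n w"
    and s: "0 < s" "s \<le> 1" and finite: "(\<Sum>n. \<integral>\<^sup>+w. ennreal (X n w powr s) \<partial>M) < \<infinity>"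
  shows "AE w in M. summable (\<lambda>n. X n w)"
proof -
  have "(\<integral>\<^sup>+w. (\<Sum>n. ennreal (X n w powr s)) \<partial>M) = (\<Sum>n. \<integral>\<^sup>+w. ennreal (X n w powr s) \<partial>M)"
    using measurable by (intro nn_integral_suminf) measurable
  with finite have "(\<integral>\<^sup>+w. (\<Sum>n. ennreal (X n w powr s)) \<partial>M) \<noteq> \<infinity>" by simp
  then have "AE w in M. (\<Sum>n. ennreal (X n w powr s)) \<noteq> \<infinity>"
    by (rule nn_integral_PInf_AE[rotated]) (use measurable in measurable)
  then show ?thesis
    using nonneg
  proof eventually_elim
    case (elim w)
    have "summable (\<lambda>n. X n w powr s)"
      by (rule summable_suminf_not_top) (use elim(1) in auto)
    then show ?case by (rule summable_of_summable_powr[rotated 3]) (use elim s in auto)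
  qed
qed

lemma non_arithmetic_log_not_AE_eq_1:
  assumes "non_arithmetic_log M X"
  shows "\<not> (AE w in M. X w = 1)"
proof
  assume "AE w in M. X w = 1"
  then have "AE w in M. X w > 0 \<longrightarrow> (\<exists>k::int. ln (X w) = 1 * of_int k)"
    by eventually_elim (auto intro: exI[of _ 0])
  with assms zero_less_one show False unfolding non_arithmetic_log_def by blast
qed

context prob_space
begin

lemma nn_integral_powr_less_top_mono:
  fixes X :: "'a \<Rightarrow> real"
  assumes measurable: "X \<in> borel_measurable M" and nonneg: "AE w in M. 0 \<le> X w"
    and s: "0 < s" "s \<le> a" and finite: "(\<integral>\<^sup>+w. ennreal (X w powr a) \<partial>M) < \<infinity>"
  shows "(\<integral>\<^sup>+w. ennreal (X w powr s) \<partial>M) < \<infinity>"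
proof -
  have pointwise: "x powr s \<le> 1 + x powr a" if "0 \<le> x" for x :: real
  proof (cases "x \<le> 1")
    case True
    then have "x powr s \<le> 1" using that s by (simp add: powr_le1)
    then show ?thesis by (smt (verit) powr_ge_zero)
  next
    case False
    then show ?thesis using s by (smt (verit) powr_mono)
  qed
  from nonneg have "AE w in M. ennreal (X w powr s) \<le> 1 + ennreal (X w powr a)"
  proof eventually_elim
    case (elim w)
    have "ennreal (X w powr s) \<le> ennreal (1 + X w powr a)" using pointwise[OF elim] by (rule ennreal_leI)
    then show ?case by simp
  qed
  then have "(\<integral>\<^sup>+w. ennreal (X w powr s) \<partial>M) \<le> (\<integral>\<^sup>+w. 1 + ennreal (X w powr a) \<partial>M)"
    by (rule nn_integral_mono_AE)
  also have "\<dots> = 1 + (\<integral>\<^sup>+w. ennreal (X w powr a) \<partial>M)"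
    using measurable by (subst nn_integral_add) (auto simp: emeasure_space_1)
  also have "\<dots> < \<infinity>" using finite by (simp add: ennreal_add_less_top)
  finally show ?thesis .
qed

lemma nn_integral_powr_le_one:
  fixes X :: "'a \<Rightarrow> real"
  assumes measurable: "X \<in> borel_measurable M" and nonneg: "AE w in M. 0 \<le> X w"
    and b: "0 < b" "b \<le> a" and one: "(\<integral>\<^sup>+w. ennreal (X w powr a) \<partial>M) = 1"
  shows "(\<integral>\<^sup>+w. ennreal (X w powr b) \<partial>M) \<le> 1"
proof -
  define \<theta> where "\<theta> = b / a"
  have \<theta>: "0 < \<theta>" "\<theta> \<le> 1" using b by (auto simp: \<theta>_def)
  have Young: "x powr b \<le> \<theta> * x powr a + (1 - \<theta>)" if "0 \<le> x" for x :: real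
  proof (cases "x = 0")
    case False
    then have "(x powr a) powr \<theta> * 1 powr (1 - \<theta>) \<le> \<theta> * x powr a + (1 - \<theta>) * 1"
      using \<theta> that by (intro Youngs_inequality_0) auto
    then show ?thesis using b by (simp add: powr_powr \<theta>_def)
  qed (use \<theta> b in simp)
  from nonneg have "AE w in M. ennreal (X w powr b) \<le> ennreal \<theta> * ennreal (X w powr a) + ennreal (1 - \<theta>)"
  proof eventually_elim
    case (elim w)
    have "ennreal (X w powr b) \<le> ennreal (\<theta> * X w powr a + (1 - \<theta>))"
      using Young[OF elim] by (rule ennreal_leI)
    also have "\<dots> = ennreal \<theta> * ennreal (X w powr a) + ennreal (1 - \<theta>)"
      using \<theta> by (simp add: ennreal_plus ennreal_mult)
    finally show ?case .
  qed
  then have "(\<integral>\<^sup>+w. ennreal (X w powr b) \<partial>M)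
      \<le> (\<integral>\<^sup>+w. ennreal \<theta> * ennreal (X w powr a) + ennreal (1 - \<theta>) \<partial>M)"
    by (rule nn_integral_mono_AE)
  also have "\<dots> = ennreal \<theta> + ennreal (1 - \<theta>)"
    using measurable by (subst nn_integral_add) (auto simp: nn_integral_cmult one emeasure_space_1)
  also have "\<dots> = 1" using \<theta> by (simp flip: ennreal_plus)
  finally show ?thesis .
qed

lemma nn_integral_powr_less_one:
  fixes X :: "'a \<Rightarrow> real"
  assumes measurable: "X \<in> borel_measurable M" and nonneg: "AE w in M. 0 \<le> X w"
    and s: "0 < s" "2 * s \<le> a" and one: "(\<integral>\<^sup>+w. ennreal (X w powr a) \<partial>M) = 1"
    and non_arithmetic: "non_arithmetic_log M X"
  shows "(\<integral>\<^sup>+w. ennreal (X w powr s) \<partial>M) < 1"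
proof -
  define y where "y w = X w powr s" for w
  have y_measurable: "y \<in> borel_measurable M" unfolding y_def using measurable by measurable
  have y_sq: "y w ^ 2 = X w powr (2 * s)" for w
    by (simp add: y_def power2_eq_square powr_add[symmetric])
  text \<open>Since \<open>y + (1 - y)\<^sup>2 / 2 = (1 + y\<^sup>2) / 2\<close> and \<open>E y\<^sup>2 \<le> 1\<close>, the defect \<open>E (1 - y)\<^sup>2 / 2\<close>
    separates \<open>E y\<close> from 1.\<close>
  have "(\<integral>\<^sup>+w. ennreal (y w) \<partial>M) + (\<integral>\<^sup>+w. ennreal ((1 - y w)\<^sup>2 / 2) \<partial>M)
      = (\<integral>\<^sup>+w. ennreal (1/2) + ennreal (1/2) * ennreal (X w powr (2 * s)) \<partial>M)"
  proof -
    have "ennreal (y w) + ennreal ((1 - y w)\<^sup>2 / 2) = ennreal (1/2) + ennreal (1/2) * ennreal (X w powr (2 * s))"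
      for w
    proof -
      have "y w + (1 - y w)\<^sup>2 / 2 = 1/2 + 1/2 * X w powr (2 * s)"
        unfolding y_sq[symmetric] by (simp add: power2_eq_square field_simps)
      moreover have "ennreal (y w) + ennreal ((1 - y w)\<^sup>2 / 2) = ennreal (y w + (1 - y w)\<^sup>2 / 2)"
        by (simp add: y_def)
      moreover have "ennreal (1/2 + 1/2 * X w powr (2 * s))
          = ennreal (1/2) + ennreal (1/2) * ennreal (X w powr (2 * s))"
        by (subst ennreal_mult[symmetric]) (auto intro: ennreal_plus)
      ultimately show ?thesis by simp
    qed
    then show ?thesis using y_measurable by (subst nn_integral_add[symmetric]) auto
  qed
  also have "\<dots> = ennreal (1/2) + ennreal (1/2) * (\<integral>\<^sup>+w. ennreal (X w powr (2 * s)) \<partial>M)"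
    using measurable by (subst nn_integral_add) (auto simp: nn_integral_cmult emeasure_space_1)
  also have "\<dots> \<le> ennreal (1/2) + ennreal (1/2) * 1"
    using nn_integral_powr_le_one[OF measurable nonneg _ s(2) one] s
    by (intro add_left_mono mult_left_mono) auto
  also have "\<dots> = ennreal (1/2 + 1/2)" unfolding mult_1_right by (rule ennreal_plus[symmetric]) auto
  also have "\<dots> = 1" by simp
  finally have sum_le: "(\<integral>\<^sup>+w. ennreal (y w) \<partial>M) + (\<integral>\<^sup>+w. ennreal ((1 - y w)\<^sup>2 / 2) \<partial>M) \<le> 1" .
  have defect_pos: "(\<integral>\<^sup>+w. ennreal ((1 - y w)\<^sup>2 / 2) \<partial>M) \<noteq> 0"
  proof
    assume "(\<integral>\<^sup>+w. ennreal ((1 - y w)\<^sup>2 / 2) \<partial>M) = 0"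
    then have "AE w in M. y w = 1"
      using y_measurable by (subst (asm) nn_integral_0_iff_AE) (auto elim!: eventually_mono)
    then have "AE w in M. X w = 1"
      using nonneg
    proof eventually_elim
      case (elim w)
      then have "0 < X w" by (cases "X w = 0") (auto simp: y_def)
      with elim s show ?case by (cases "X w = 1") (auto simp: y_def)
    qed
    with non_arithmetic_log_not_AE_eq_1[OF non_arithmetic] show False by simp
  qed
  show ?thesis
  proof (rule ccontr)
    assume "\<not> ?thesis"
    then have "1 \<le> (\<integral>\<^sup>+w. ennreal (y w) \<partial>M)" by (simp add: y_def)
    then have "1 + (\<integral>\<^sup>+w. ennreal ((1 - y w)\<^sup>2 / 2) \<partial>M) \<le> 1 + 0"
      using order_trans[OF add_right_mono sum_le] by simp
    with defect_pos show False by (subst (asm) ennreal_add_left_cancel_le) auto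
  qed
qed

end


section \<open>Subinvariant vectors of upper triangular matrices\<close>

lemma power_card_less_decreasing:
  fixes k l :: "'n::{finite,linorder}" and \<epsilon> :: real
  assumes "0 < \<epsilon>" "\<epsilon> \<le> 1" and "k < l"
  shows "\<epsilon> ^ card {x. x < l} \<le> \<epsilon> * \<epsilon> ^ card {x. x < k}"
proof -
  have "insert k {x. x < k} \<subseteq> {x. x < l}" using assms(3) by auto
  then have "Suc (card {x. x < k}) \<le> card {x. x < l}"
    using card_mono[of "{x. x < l}" "insert k {x. x < k}"] by simp
  then have "\<epsilon> ^ card {x. x < l} \<le> \<epsilon> ^ Suc (card {x. x < k})"
    using assms by (intro power_decreasing) auto
  then show ?thesis by simp
qed

lemma upper_triangular_subinvariant_vector:
  fixes m :: "'n::{finite,linorder} \<Rightarrow> 'n \<Rightarrow> real"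
  assumes nonneg: "\<And>k l. 0 \<le> m k l" and upper: "\<And>k l. l < k \<Longrightarrow> m k l = 0"
    and diag: "\<And>k. m k k < 1"
  obtains r v where "0 \<le> r" "r < 1" "\<And>k. 0 < v k" "\<And>k. (\<Sum>l\<in>UNIV. m k l * v l) \<le> r * v k"
proof -
  define \<mu> where "\<mu> = Max (range (\<lambda>k. m k k))"
  have \<mu>_ge: "m k k \<le> \<mu>" for k unfolding \<mu>_def by (rule Max_ge) auto
  have "\<mu> < 1" unfolding \<mu>_def using diag by (subst Max_less_iff) auto
  have "0 \<le> \<mu>" using \<mu>_ge nonneg order_trans by blast
  define r where "r = (1 + \<mu>) / 2"
  have r: "0 \<le> r" "r < 1" "\<mu> < r" using \<open>0 \<le> \<mu>\<close> \<open>\<mu> < 1\<close> by (auto simp: r_def)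
  define S where "S = (\<Sum>k\<in>UNIV. \<Sum>l\<in>UNIV. m k l)"
  have row_le: "(\<Sum>l\<in>UNIV. m k l) \<le> S" for k
    unfolding S_def by (rule member_le_sum) (auto intro!: sum_nonneg nonneg)
  have "0 \<le> S" unfolding S_def by (auto intro!: sum_nonneg nonneg)
  text \<open>Weights decreasing geometrically along the order with ratio \<open>\<epsilon>\<close>: the strictly upper
    part of \<open>m\<close> then contributes at most \<open>\<epsilon> S\<close>, which fits into the gap \<open>r - \<mu>\<close>.\<close>
  define \<epsilon> where "\<epsilon> = min 1 ((r - \<mu>) / (S + 1))"
  have \<epsilon>: "0 < \<epsilon>" "\<epsilon> \<le> 1" using r \<open>0 \<le> S\<close> by (auto simp: \<epsilon>_def)
  have "\<epsilon> * S \<le> (r - \<mu>) / (S + 1) * (S + 1)"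
    using \<open>0 \<le> S\<close> r by (intro mult_mono) (auto simp: \<epsilon>_def)
  then have \<epsilon>S: "\<epsilon> * S \<le> r - \<mu>" using \<open>0 \<le> S\<close> by simp
  define v where "v k = \<epsilon> ^ card {l. l < k}" for k :: 'n
  have v_pos: "0 < v k" for k using \<epsilon> by (simp add: v_def)
  have v_decr: "v l \<le> \<epsilon> * v k" if "k < l" for k l
    unfolding v_def using power_card_less_decreasing[OF \<epsilon> that] .
  have sub: "(\<Sum>l\<in>UNIV. m k l * v l) \<le> r * v k" for k
  proof -
    have "m k l * v l \<le> (if l = k then m k k * v k else 0) + m k l * (\<epsilon> * v k)" for l
    proof (cases l k rule: linorder_cases)
      case less
      then show ?thesis using upper[OF less] nonneg[of k l] \<epsilon> v_pos[of k] by simp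
    next
      case equal
      then show ?thesis using nonneg[of k k] \<epsilon> v_pos[of k] by simp
    next
      case greater
      then show ?thesis using mult_left_mono[OF v_decr[OF greater] nonneg[of k l]] by simp
    qed
    then have "(\<Sum>l\<in>UNIV. m k l * v l) \<le> (\<Sum>l\<in>UNIV. (if l = k then m k k * v k else 0) + m k l * (\<epsilon> * v k))"
      by (rule sum_mono)
    also have "\<dots> = m k k * v k + (\<Sum>l\<in>UNIV. m k l) * (\<epsilon> * v k)"
      by (simp add: sum.distrib sum_distrib_right)
    also have "\<dots> \<le> \<mu> * v k + S * (\<epsilon> * v k)"
      using \<mu>_ge[of k] row_le[of k] v_pos[of k] \<epsilon> by (intro add_mono mult_right_mono) auto
    also have "\<dots> = (\<mu> + \<epsilon> * S) * v k" by (simp add: algebra_simps)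
    also have "\<dots> \<le> r * v k" using \<epsilon>S v_pos[of k] by (intro mult_right_mono) auto
    finally show ?thesis .
  qed
  show ?thesis by (rule that[OF r(1,2) v_pos sub])
qed

lemma upper_triangular_subinvariant_vector_above:
  fixes m :: "'n::{finite,linorder} \<Rightarrow> 'n \<Rightarrow> real" and c :: "'n \<Rightarrow> real"
  assumes "\<And>k l. 0 \<le> m k l" and "\<And>k l. l < k \<Longrightarrow> m k l = 0" and "\<And>k. m k k < 1"
  obtains r v where "0 \<le> r" "r < 1" "\<And>k. 0 < v k" "\<And>k. (\<Sum>l\<in>UNIV. m k l * v l) \<le> r * v k"
    "\<And>k. c k \<le> v k"
proof -
  obtain r v where r: "0 \<le> r" "r < 1" and v: "\<And>k. 0 < v k"
    and sub: "\<And>k. (\<Sum>l\<in>UNIV. m k l * v l) \<le> r * v k"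
    using upper_triangular_subinvariant_vector assms by blast
  define C where "C = (\<Sum>k\<in>UNIV. \<bar>c k\<bar> / v k) + 1"
  have "0 < C" unfolding C_def by (intro add_nonneg_pos sum_nonneg divide_nonneg_pos abs_ge_zero v) simp
  show ?thesis
  proof (rule that[of r "\<lambda>k. C * v k"])
    fix k
    show "0 < C * v k" using \<open>0 < C\<close> v by simp
    have "(\<Sum>l\<in>UNIV. m k l * (C * v l)) = C * (\<Sum>l\<in>UNIV. m k l * v l)"
      by (simp add: sum_distrib_left algebra_simps)
    also have "\<dots> \<le> r * (C * v k)" using sub[of k] \<open>0 < C\<close> by simp
    finally show "(\<Sum>l\<in>UNIV. m k l * (C * v l)) \<le> r * (C * v k)" .
    have "\<bar>c k\<bar> / v k \<le> C"
      unfolding C_def using member_le_sum[of k UNIV "\<lambda>k. \<bar>c k\<bar> / v k"] v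
      by (simp add: less_imp_le)
    then show "c k \<le> C * v k" using v[of k] by (simp add: divide_le_eq mult.commute)
  qed (use r in auto)
qed


section \<open>I.i.d. sequences of random matrices\<close>

lemma borel_measurable_fst_entry[measurable]:
  "(\<lambda>p::(real^'n::finite^'n) \<times> (real^'n). fst p $ i $ j) \<in> borel_measurable borel"
  by (intro borel_measurable_continuous_onI continuous_intros)

lemma borel_measurable_snd_entry[measurable]:
  "(\<lambda>p::(real^'n::finite^'n) \<times> (real^'n). snd p $ i) \<in> borel_measurable borel"
  by (intro borel_measurable_continuous_onI continuous_intros)

locale iid_sequence = prob_space M for M :: "'w measure" +
  fixes A :: "int \<Rightarrow> 'w \<Rightarrow> real^'n::finite^'n"
    and B :: "int \<Rightarrow> 'w \<Rightarrow> real^'n"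
  assumes indep: "indep_vars (\<lambda>_. borel) (\<lambda>t w. (A t w, B t w)) UNIV"
    and ident_distr: "\<And>t. distr M borel (\<lambda>w. (A t w, B t w)) = distr M borel (\<lambda>w. (A 0 w, B 0 w))"
begin

definition Z :: "int \<Rightarrow> 'w \<Rightarrow> (real^'n^'n) \<times> (real^'n)" where
  "Z t w = (A t w, B t w)"

lemma measurable_Z[measurable]: "Z t \<in> borel_measurable M"
  using indep unfolding indep_vars_def Z_def by auto

lemma borel_measurable_A_entry[measurable]: "(\<lambda>w. A t w $ i $ j) \<in> borel_measurable M"
  using measurable_compose[OF measurable_Z borel_measurable_fst_entry] by (simp add: Z_def)

lemma borel_measurable_B_entry[measurable]: "(\<lambda>w. B t w $ i) \<in> borel_measurable M"
  using measurable_compose[OF measurable_Z borel_measurable_snd_entry] by (simp add: Z_def)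

lemma borel_measurable_mat_prod_entry[measurable]: "(\<lambda>w. mat_prod A t n w $ i $ j) \<in> borel_measurable M"
  by (induction n arbitrary: i j) (simp_all add: matrix_matrix_mult_def)

lemma distr_Z_shift: "distr M borel (Z t) = distr M borel (Z 0)"
  using ident_distr[of t] by (simp add: Z_def[abs_def])

lemma nn_integral_Z_shift:
  assumes "g \<in> borel_measurable borel"
  shows "(\<integral>\<^sup>+ w. g (Z t w) \<partial>M) = (\<integral>\<^sup>+ w. g (Z 0 w) \<partial>M)"
proof -
  have "(\<integral>\<^sup>+ w. g (Z t w) \<partial>M) = (\<integral>\<^sup>+ x. g x \<partial>distr M borel (Z t))"
    using assms by (simp add: nn_integral_distr)
  also have "\<dots> = (\<integral>\<^sup>+ w. g (Z 0 w) \<partial>M)"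
    using assms by (simp add: distr_Z_shift[of t] nn_integral_distr)
  finally show ?thesis .
qed

lemma AE_Z_shift:
  assumes P: "{x \<in> space borel. P x} \<in> sets borel" and "AE w in M. P (Z 0 w)"
  shows "AE w in M. P (Z t w)"
proof -
  have "AE x in distr M borel (Z 0). P x" using assms by (simp add: AE_distr_iff)
  then have "AE x in distr M borel (Z t). P x" unfolding distr_Z_shift[of t] .
  then show ?thesis using P by (simp add: AE_distr_iff)
qed

lemma nn_integral_restrict_Z_mult:
  assumes "K \<inter> L = {}"
    and f: "f \<in> borel_measurable (PiM K (\<lambda>_. borel))" and g: "g \<in> borel_measurable (PiM L (\<lambda>_. borel))"
    and f_nonneg: "\<And>x. 0 \<le> f x" and g_nonneg: "\<And>x. 0 \<le> g x"
  shows "(\<integral>\<^sup>+ w. ennreal (f (restrict (\<lambda>i. Z i w) K) * g (restrict (\<lambda>i. Z i w) L)) \<partial>M)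
       = (\<integral>\<^sup>+ w. ennreal (f (restrict (\<lambda>i. Z i w) K)) \<partial>M) * (\<integral>\<^sup>+ w. ennreal (g (restrict (\<lambda>i. Z i w) L)) \<partial>M)"
proof -
  have "indep_vars (\<lambda>_. borel) Z UNIV" using indep by (simp add: Z_def[abs_def])
  then have "indep_var (PiM K (\<lambda>_. borel)) (\<lambda>w. restrict (\<lambda>i. Z i w) K)
      (PiM L (\<lambda>_. borel)) (\<lambda>w. restrict (\<lambda>i. Z i w) L)"
    using assms(1) by (rule indep_var_restrict) auto
  moreover have "(\<lambda>x. ennreal (f x)) \<in> borel_measurable (PiM K (\<lambda>_. borel))"
    and "(\<lambda>x. ennreal (g x)) \<in> borel_measurable (PiM L (\<lambda>_. borel))"
    using f g by measurable
  ultimately have "indep_var borel (\<lambda>w. ennreal (f (restrict (\<lambda>i. Z i w) K)))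
      borel (\<lambda>w. ennreal (g (restrict (\<lambda>i. Z i w) L)))"
    using indep_var_compose[of _ _ _ _ "\<lambda>x. ennreal (f x)" borel "\<lambda>x. ennreal (g x)" borel]
    by (simp add: comp_def)
  then have "indep_vars (\<lambda>_. borel) (case_bool (\<lambda>w. ennreal (f (restrict (\<lambda>i. Z i w) K)))
      (\<lambda>w. ennreal (g (restrict (\<lambda>i. Z i w) L)))) UNIV"
    unfolding indep_var_def by (rule indep_vars_cong[THEN iffD1, rotated 3]) (auto split: bool.split)
  from indep_vars_nn_integral[OF _ this] show ?thesis
    by (simp add: UNIV_bool mult.commute ennreal_mult' f_nonneg g_nonneg)
qed


lemma mat_prod_eq_restrict_Z:
  assumes "\<And>m. m < n \<Longrightarrow> t - int m \<in> K"
  shows "mat_prod A t n w = mat_prod (\<lambda>k x. fst (x k)) t n (restrict (\<lambda>i. Z i w) K)"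
  using assms by (induction n) (simp_all add: Z_def)

lemma borel_measurable_mat_prod_PiM:
  assumes "\<And>m. m < n \<Longrightarrow> t - int m \<in> K"
  shows "(\<lambda>x::int \<Rightarrow> (real^'n^'n) \<times> (real^'n). mat_prod (\<lambda>k x. fst (x k)) t n x $ i $ j)
           \<in> borel_measurable (PiM K (\<lambda>_. borel))"
  using assms
proof (induction n arbitrary: i j)
  case (Suc n)
  have "(\<lambda>x::int \<Rightarrow> (real^'n^'n) \<times> (real^'n). fst (x (t - int n)) $ l $ j)
      \<in> borel_measurable (PiM K (\<lambda>_. borel))" for l
    using Suc.prems measurable_compose[OF measurable_component_singleton[of "t - int n" K "\<lambda>_. borel"]
        borel_measurable_fst_entry]
    by simp
  with Suc show ?case
    by (simp add: matrix_matrix_mult_def)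
qed simp

text \<open>The entries of A_t ... A_(t-n+1) depend only on Z_t, ..., Z_(t-n+1), hence are independent
  of Z_(t-n).\<close>
lemma nn_integral_mat_prod_powr_mult:
  assumes g: "g \<in> borel_measurable borel" and g_nonneg: "\<And>x. 0 \<le> g x"
  shows "(\<integral>\<^sup>+ w. ennreal ((mat_prod A t n w $ i $ k) powr s * g (Z (t - int n) w)) \<partial>M)
       = (\<integral>\<^sup>+ w. ennreal ((mat_prod A t n w $ i $ k) powr s) \<partial>M) * (\<integral>\<^sup>+ w. ennreal (g (Z 0 w)) \<partial>M)"
proof -
  define K where "K = {t - int n + 1..t}"
  define L where "L = {t - int n}"
  have K: "\<And>m. m < n \<Longrightarrow> t - int m \<in> K" by (auto simp: K_def)
  define f where "f x = (mat_prod (\<lambda>k x. fst (x k)) t n x $ i $ k) powr s"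
    for x :: "int \<Rightarrow> (real^'n^'n) \<times> (real^'n)"
  define h where "h x = g (x (t - int n))" for x :: "int \<Rightarrow> (real^'n^'n) \<times> (real^'n)"
  have "f \<in> borel_measurable (PiM K (\<lambda>_. borel))"
    unfolding f_def[abs_def] by (intro powr_real_measurable borel_measurable_mat_prod_PiM K) auto
  moreover have "h \<in> borel_measurable (PiM L (\<lambda>_. borel))"
    unfolding h_def[abs_def] L_def
    by (rule measurable_compose[OF measurable_component_singleton[of "t - int n" _ "\<lambda>_. borel"] g]) simp
  moreover have "K \<inter> L = {}" by (auto simp: K_def L_def)
  moreover have "f (restrict (\<lambda>i. Z i w) K) = (mat_prod A t n w $ i $ k) powr s" for w
    unfolding f_def using mat_prod_eq_restrict_Z[OF K] by simp
  moreover have "h (restrict (\<lambda>i. Z i w) L) = g (Z (t - int n) w)" for w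
    by (simp add: h_def L_def)
  moreover have "(\<integral>\<^sup>+ w. ennreal (g (Z (t - int n) w)) \<partial>M) = (\<integral>\<^sup>+ w. ennreal (g (Z 0 w)) \<partial>M)"
    using g by (intro nn_integral_Z_shift) measurable
  ultimately show ?thesis
    using nn_integral_restrict_Z_mult[of K L f h] g_nonneg by (simp add: f_def h_def)
qed

end

locale nonneg_iid_sequence = iid_sequence M A B
  for M :: "'w measure" and A :: "int \<Rightarrow> 'w \<Rightarrow> real^'n::finite^'n" and B +
  assumes nonneg: "AE w in M. (\<forall>i j. 0 \<le> A 0 w $ i $ j) \<and> (\<forall>i. 0 \<le> B 0 w $ i)"
begin

lemma AE_nonneg: "AE w in M. \<forall>t. (\<forall>i j. 0 \<le> A t w $ i $ j) \<and> (\<forall>i. 0 \<le> B t w $ i)"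
proof -
  let ?P = "\<lambda>p::(real^'n^'n) \<times> (real^'n). (\<forall>i j. 0 \<le> fst p $ i $ j) \<and> (\<forall>i. 0 \<le> snd p $ i)"
  have P: "{x \<in> space borel. ?P x} \<in> sets borel" by measurable
  have "AE w in M. ?P (Z t w)" for t
    using nonneg by (rule_tac AE_Z_shift[OF P]) (simp add: Z_def)
  then show ?thesis unfolding AE_all_countable by (simp add: Z_def)
qed

lemma AE_entry_eq_0:
  assumes "measure M {w \<in> space M. 0 < A 0 w $ i $ j} = 0"
  shows "AE w in M. A t w $ i $ j = 0"
proof -
  have P: "{x \<in> space borel. (\<lambda>p::(real^'n^'n) \<times> (real^'n). fst p $ i $ j = 0) x} \<in> sets borel"
    by measurable
  have "AE w in M. \<not> 0 < A 0 w $ i $ j"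
    using assms by (subst (asm) prob_eq_0) auto
  with nonneg have "AE w in M. fst (Z 0 w) $ i $ j = 0"
    by eventually_elim (simp add: Z_def order.strict_iff_order)
  from AE_Z_shift[OF _ this] show ?thesis by (simp add: Z_def)
qed

lemma AE_entry_eq_0_unless_prec:
  "AE w in M. \<forall>t j. j \<noteq> i \<longrightarrow> \<not> prec M A i j \<longrightarrow> A t w $ i $ j = 0"
  unfolding AE_all_countable
proof (intro allI)
  fix t j
  show "AE w in M. j \<noteq> i \<longrightarrow> \<not> prec M A i j \<longrightarrow> A t w $ i $ j = 0"
  proof (cases "j \<noteq> i \<and> \<not> prec M A i j")
    case True
    then have "measure M {w \<in> space M. 0 < A 0 w $ i $ j} = 0"
      using measure_nonneg[of M "{w \<in> space M. 0 < A 0 w $ i $ j}"] by (auto simp: prec_def not_less)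
    then show ?thesis by (auto dest: AE_entry_eq_0[where t = t])
  qed auto
qed


lemma nn_integral_powr_mat_prod_mult_le:
  fixes c :: "'n \<Rightarrow> (real^'n^'n) \<times> (real^'n) \<Rightarrow> real"
  assumes c: "\<And>k. c k \<in> borel_measurable borel"
    and c_nonneg: "AE w in M. \<forall>k. 0 \<le> c k (Z (t - int n) w)" and s: "0 < s" "s \<le> 1"
  shows "(\<integral>\<^sup>+w. ennreal ((\<Sum>k\<in>UNIV. mat_prod A t n w $ i $ k * c k (Z (t - int n) w)) powr s) \<partial>M)
    \<le> (\<Sum>k\<in>UNIV. (\<integral>\<^sup>+w. ennreal ((mat_prod A t n w $ i $ k) powr s) \<partial>M)
                    * (\<integral>\<^sup>+w. ennreal (c k (Z 0 w) powr s) \<partial>M))"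
proof -
  from AE_nonneg c_nonneg have "AE w in M.
      ennreal ((\<Sum>k\<in>UNIV. mat_prod A t n w $ i $ k * c k (Z (t - int n) w)) powr s)
      \<le> (\<Sum>k\<in>UNIV. ennreal ((mat_prod A t n w $ i $ k) powr s * c k (Z (t - int n) w) powr s))"
  proof eventually_elim
    case (elim w)
    have P_nonneg: "0 \<le> mat_prod A t n w $ i $ k" for k
      using elim(1) by (intro mat_prod_nonneg) auto
    have "(\<Sum>k\<in>UNIV. mat_prod A t n w $ i $ k * c k (Z (t - int n) w)) powr s
        \<le> (\<Sum>k\<in>UNIV. (mat_prod A t n w $ i $ k * c k (Z (t - int n) w)) powr s)"
      using elim(2) P_nonneg s by (intro powr_sum_le_sum_powr) auto
    also have "\<dots> = (\<Sum>k\<in>UNIV. (mat_prod A t n w $ i $ k) powr s * c k (Z (t - int n) w) powr s)"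
      using elim(2) P_nonneg by (simp add: powr_mult)
    finally show ?case by (simp add: ennreal_leI)
  qed
  then have "(\<integral>\<^sup>+w. ennreal ((\<Sum>k\<in>UNIV. mat_prod A t n w $ i $ k * c k (Z (t - int n) w)) powr s) \<partial>M)
      \<le> (\<integral>\<^sup>+w. (\<Sum>k\<in>UNIV. ennreal ((mat_prod A t n w $ i $ k) powr s * c k (Z (t - int n) w) powr s)) \<partial>M)"
    by (rule nn_integral_mono_AE)
  also have "\<dots> = (\<Sum>k\<in>UNIV. \<integral>\<^sup>+w. ennreal ((mat_prod A t n w $ i $ k) powr s * c k (Z (t - int n) w) powr s) \<partial>M)"
    by (rule nn_integral_sum) (use c in measurable)
  also have "\<dots> = (\<Sum>k\<in>UNIV. (\<integral>\<^sup>+w. ennreal ((mat_prod A t n w $ i $ k) powr s) \<partial>M)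
                    * (\<integral>\<^sup>+w. ennreal (c k (Z 0 w) powr s) \<partial>M))"
    using c by (intro sum.cong refl nn_integral_mat_prod_powr_mult[of "\<lambda>p. c _ p powr s", simplified]) measurable
  finally show ?thesis .
qed


lemma nn_integral_powr_mat_prod_weighted_le:
  assumes s: "0 < s" "s \<le> 1" and r: "0 \<le> r" and v: "\<And>k. 0 \<le> v k"
    and sub: "\<And>k. (\<Sum>l\<in>UNIV. (\<integral>\<^sup>+w. ennreal ((A 0 w $ k $ l) powr s) \<partial>M) * ennreal (v l)) \<le> ennreal (r * v k)"
  shows "(\<Sum>j\<in>UNIV. (\<integral>\<^sup>+w. ennreal ((mat_prod A t n w $ i $ j) powr s) \<partial>M) * ennreal (v j))
    \<le> ennreal (r ^ n * v i)"
proof -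
  define E where "E n j = (\<integral>\<^sup>+w. ennreal ((mat_prod A t n w $ i $ j) powr s) \<partial>M)" for n j
  define m where "m k l = (\<integral>\<^sup>+w. ennreal ((A 0 w $ k $ l) powr s) \<partial>M)" for k l
  have E_Suc: "E (Suc n) j \<le> (\<Sum>k\<in>UNIV. E n k * m k j)" for n j
  proof -
    have "mat_prod A t (Suc n) w $ i $ j = (\<Sum>k\<in>UNIV. mat_prod A t n w $ i $ k * fst (Z (t - int n) w) $ k $ j)"
      for w by (simp add: matrix_matrix_mult_def Z_def)
    moreover have "AE w in M. \<forall>k. 0 \<le> fst (Z (t - int n) w) $ k $ j"
      using AE_nonneg by eventually_elim (simp add: Z_def)
    ultimately show ?thesis
      using nn_integral_powr_mat_prod_mult_le[of "\<lambda>k p. fst p $ k $ j", OF _ _ s]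
      by (simp add: E_def m_def Z_def)
  qed
  show ?thesis
  proof (induction n)
    case 0
    have "E 0 j * ennreal (v j) = (if j = i then ennreal (v i) else 0)" for j
      by (simp add: E_def mat_def emeasure_space_1)
    then have "(\<Sum>j\<in>UNIV. E 0 j * ennreal (v j)) = ennreal (v i)" by simp
    then show ?case unfolding E_def by simp
  next
    case (Suc n)
    have "(\<Sum>j\<in>UNIV. E (Suc n) j * ennreal (v j)) \<le> (\<Sum>j\<in>UNIV. (\<Sum>k\<in>UNIV. E n k * m k j) * ennreal (v j))"
      by (intro sum_mono mult_right_mono E_Suc) auto
    also have "\<dots> = (\<Sum>k\<in>UNIV. E n k * (\<Sum>j\<in>UNIV. m k j * ennreal (v j)))"
      by (simp add: sum_distrib_right sum_distrib_left mult.assoc) (rule sum.swap)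
    also have "\<dots> \<le> (\<Sum>k\<in>UNIV. E n k * ennreal (r * v k))"
      by (intro sum_mono mult_left_mono) (auto simp: m_def sub)
    also have "\<dots> = ennreal r * (\<Sum>k\<in>UNIV. E n k * ennreal (v k))"
      using r v by (simp add: ennreal_mult sum_distrib_left mult.left_commute)
    also have "\<dots> \<le> ennreal r * ennreal (r ^ n * v i)"
      using Suc by (simp add: E_def mult_left_mono)
    also have "\<dots> = ennreal (r ^ Suc n * v i)"
      using r v by (simp add: ennreal_mult[symmetric] mult.assoc)
    finally show ?case by (simp add: E_def)
  qed
qed


lemma AE_stat_sol_summable:
  assumes s: "0 < s" "s \<le> 1" and r: "0 \<le> r" "r < 1" and v: "\<And>k. 0 \<le> v k"
    and sub: "\<And>k. (\<Sum>l\<in>UNIV. (\<integral>\<^sup>+w. ennreal ((A 0 w $ k $ l) powr s) \<partial>M) * ennreal (v l)) \<le> ennreal (r * v k)"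
    and B_le: "\<And>j. (\<integral>\<^sup>+w. ennreal ((B 0 w $ j) powr s) \<partial>M) \<le> ennreal (v j)"
  shows "AE w in M. stat_sol_summable A B w"
proof -
  have "AE w in M. summable (\<lambda>n. (mat_prod A t n w *v B (t - int n) w) $ i)" for t i
  proof (rule AE_summable_of_summable_nn_integral_powr[OF _ _ s])
    have term_eq: "(mat_prod A t n w *v B (t - int n) w) $ i
        = (\<Sum>j\<in>UNIV. mat_prod A t n w $ i $ j * snd (Z (t - int n) w) $ j)" for n w
      by (simp add: matrix_vector_mult_def Z_def)
    show "(\<lambda>w. (mat_prod A t n w *v B (t - int n) w) $ i) \<in> borel_measurable M" for n
      unfolding term_eq by measurable
    show "AE w in M. \<forall>n. 0 \<le> (mat_prod A t n w *v B (t - int n) w) $ i"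
      using AE_nonneg by eventually_elim (auto intro: mat_prod_mult_vec_nonneg)
    have "(\<integral>\<^sup>+w. ennreal (((mat_prod A t n w *v B (t - int n) w) $ i) powr s) \<partial>M) \<le> ennreal (r ^ n * v i)"
      for n
    proof -
      have "AE w in M. \<forall>j. 0 \<le> snd (Z (t - int n) w) $ j"
        using AE_nonneg by eventually_elim (simp add: Z_def)
      then have "(\<integral>\<^sup>+w. ennreal (((mat_prod A t n w *v B (t - int n) w) $ i) powr s) \<partial>M)
          \<le> (\<Sum>j\<in>UNIV. (\<integral>\<^sup>+w. ennreal ((mat_prod A t n w $ i $ j) powr s) \<partial>M)
                          * (\<integral>\<^sup>+w. ennreal ((B 0 w $ j) powr s) \<partial>M))"
        unfolding term_eq using nn_integral_powr_mat_prod_mult_le[of "\<lambda>j p. snd p $ j", OF _ _ s]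
        by (simp add: Z_def)
      also have "\<dots> \<le> (\<Sum>j\<in>UNIV. (\<integral>\<^sup>+w. ennreal ((mat_prod A t n w $ i $ j) powr s) \<partial>M) * ennreal (v j))"
        by (intro sum_mono mult_left_mono B_le) auto
      also have "\<dots> \<le> ennreal (r ^ n * v i)"
        by (rule nn_integral_powr_mat_prod_weighted_le[OF s r(1) v sub])
      finally show ?thesis .
    qed
    then have "(\<Sum>n. \<integral>\<^sup>+w. ennreal (((mat_prod A t n w *v B (t - int n) w) $ i) powr s) \<partial>M)
        \<le> (\<Sum>n. ennreal (r ^ n * v i))"
      by (intro suminf_le summableI)
    also have "\<dots> = ennreal (\<Sum>n. r ^ n * v i)"
      using r v by (intro suminf_ennreal2 summable_mult2 summable_geometric) auto
    finally show "(\<Sum>n. \<integral>\<^sup>+w. ennreal (((mat_prod A t n w *v B (t - int n) w) $ i) powr s) \<partial>M) < \<infinity>"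
      by (simp add: le_less_trans)
  qed
  then show ?thesis unfolding stat_sol_summable_def AE_all_countable by blast
qed

end

lemma AE_stat_sol_summable_upper_triangular:
  fixes A :: "int \<Rightarrow> 'w \<Rightarrow> real^('n::{finite,linorder})^('n::{finite,linorder})"
  assumes "nonneg_iid_sequence M A B" and s: "0 < s" "s \<le> 1"
    and diag: "\<And>k. (\<integral>\<^sup>+w. ennreal ((A 0 w $ k $ k) powr s) \<partial>M) < 1"
    and upper: "\<And>k l. l < k \<Longrightarrow> AE w in M. A 0 w $ k $ l = 0"
    and A_finite: "\<And>k l. (\<integral>\<^sup>+w. ennreal ((A 0 w $ k $ l) powr s) \<partial>M) < \<infinity>"
    and B_finite: "\<And>j. (\<integral>\<^sup>+w. ennreal ((B 0 w $ j) powr s) \<partial>M) < \<infinity>"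
  shows "AE w in M. stat_sol_summable A B w"
proof -
  interpret nonneg_iid_sequence M A B by fact
  define m where "m k l = enn2real (\<integral>\<^sup>+w. ennreal ((A 0 w $ k $ l) powr s) \<partial>M)" for k l
  define b where "b j = enn2real (\<integral>\<^sup>+w. ennreal ((B 0 w $ j) powr s) \<partial>M)" for j
  have m_eq: "(\<integral>\<^sup>+w. ennreal ((A 0 w $ k $ l) powr s) \<partial>M) = ennreal (m k l)" for k l
    using A_finite[of k l] by (simp add: m_def)
  have b_eq: "(\<integral>\<^sup>+w. ennreal ((B 0 w $ j) powr s) \<partial>M) = ennreal (b j)" for j
    using B_finite[of j] by (simp add: b_def)
  have m_upper: "m k l = 0" if "l < k" for k l
  proof -
    have "(\<integral>\<^sup>+w. ennreal ((A 0 w $ k $ l) powr s) \<partial>M) = (\<integral>\<^sup>+w. 0 \<partial>M)"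
      using upper[OF that] by (intro nn_integral_cong_AE) (auto elim!: eventually_mono)
    then show ?thesis by (simp add: m_def)
  qed
  have m_diag: "m k k < 1" for k
    using diag[of k] unfolding m_eq by (simp add: m_def ennreal_less_iff)
  have "0 \<le> m k l" for k l by (simp add: m_def)
  then obtain r v where r: "0 \<le> r" "r < 1" and v: "\<And>k. 0 < v k"
    and sub: "\<And>k. (\<Sum>l\<in>UNIV. m k l * v l) \<le> r * v k" and b_le: "\<And>j. b j \<le> v j"
    using upper_triangular_subinvariant_vector_above[of m b] m_upper m_diag by blast
  show ?thesis
  proof (rule AE_stat_sol_summable[OF s r])
    show "0 \<le> v k" for k using v[of k] by simp
    have "(\<Sum>l\<in>UNIV. ennreal (m k l) * ennreal (v l)) = ennreal (\<Sum>l\<in>UNIV. m k l * v l)" for k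
      using v by (simp add: m_def ennreal_mult less_imp_le sum_nonneg flip: sum_ennreal)
    then show "(\<Sum>l\<in>UNIV. (\<integral>\<^sup>+w. ennreal ((A 0 w $ k $ l) powr s) \<partial>M) * ennreal (v l)) \<le> ennreal (r * v k)"
      for k
      unfolding m_eq using sub[of k] by (simp add: ennreal_leI)
    show "(\<integral>\<^sup>+w. ennreal ((B 0 w $ j) powr s) \<partial>M) \<le> ennreal (v j)" for j
      unfolding b_eq using b_le[of j] by (rule ennreal_leI)
  qed
qed

theorem lemma5p1:
  fixes M :: "'w measure"
    and A :: "int \<Rightarrow> 'w \<Rightarrow> real^('n::{finite,linorder})^('n::{finite,linorder})"
    and B :: "int \<Rightarrow> 'w \<Rightarrow> real^('n::{finite,linorder})"
    and \<alpha> :: "('n::{finite,linorder}) \<Rightarrow> real"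
  assumes "prob_space M"
    and iid_indep: "prob_space.indep_vars M (\<lambda>_. borel) (\<lambda>t w. (A t w, B t w)) UNIV"
    and iid_dist: "\<And>t. distr M borel (\<lambda>w. (A t w, B t w)) = distr M borel (\<lambda>w. (A 0 w, B 0 w))"
    and T1: "AE w in M. (\<forall>i j. A 0 w $ i $ j \<ge> 0) \<and> (\<forall>i. B 0 w $ i \<ge> 0)"
    and T2: "\<And>i. measure M {w \<in> space M. B 0 w $ i = 0} < 1"
    and T3: "\<And>i j. i > j \<Longrightarrow> measure M {w \<in> space M. A 0 w $ i $ j = 0} = 1"
    and T4_pos: "\<And>i. \<alpha> i > 0"
    and T4_inj: "inj \<alpha>"
    and T4: "\<And>i. (\<integral>\<^sup>+ w. ennreal ((A 0 w $ i $ i) powr \<alpha> i) \<partial>M) = 1"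
    and T5: "\<And>i j. (\<integral>\<^sup>+ w. ennreal ((A 0 w $ i $ j) powr \<alpha> i) \<partial>M) < \<infinity>"
    and T6: "\<And>i. (\<integral>\<^sup>+ w. ennreal ((B 0 w $ i) powr \<alpha> i) \<partial>M) < \<infinity>"
    and T7: "\<And>i. (\<integral>\<^sup>+ w. ennreal ((A 0 w $ i $ i) powr \<alpha> i * max 0 (ln (A 0 w $ i $ i))) \<partial>M) < \<infinity>"
    and T8: "\<And>i. non_arithmetic_log M (\<lambda>w. A 0 w $ i $ i)"
  shows "\<forall>t i. AE w in M.
           stat_sol A B t w $ i =
             (\<Sum>n. diag_prod A i t (t - int n + 1) w * D_term M A B (stat_sol A B) i (t - int n) w)"
proof -
  interpret prob_space M by fact
  interpret nonneg_iid_sequence M A B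
    using iid_indep iid_dist T1 by unfold_locales
  define s where "s = min 1 (Min (range \<alpha>)) / 2"
  have "0 < s" "s \<le> 1" "2 * s \<le> \<alpha> i" for i
    using T4_pos by (auto simp: s_def min_le_iff_disj)
  then have s: "0 < s" "s \<le> 1" "\<And>i. 2 * s \<le> \<alpha> i" "\<And>i. s \<le> \<alpha> i"
    by (smt (verit))+
  have A_nonneg: "AE w in M. 0 \<le> A 0 w $ k $ l" for k l using T1 by eventually_elim auto
  have B_nonneg: "AE w in M. 0 \<le> B 0 w $ j" for j using T1 by eventually_elim auto
  have summable: "AE w in M. stat_sol_summable A B w"
  proof (rule AE_stat_sol_summable_upper_triangular[OF _ s(1,2)])
    show "nonneg_iid_sequence M A B" ..
    show "(\<integral>\<^sup>+w. ennreal ((A 0 w $ k $ k) powr s) \<partial>M) < 1" for k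
      by (rule nn_integral_powr_less_one[OF _ A_nonneg s(1) s(3) T4 T8]) simp
    show "AE w in M. A 0 w $ k $ l = 0" if "l < k" for k l
      using AE_prob_1[OF T3[OF that]] by simp
    show "(\<integral>\<^sup>+w. ennreal ((A 0 w $ k $ l) powr s) \<partial>M) < \<infinity>" for k l
      by (rule nn_integral_powr_less_top_mono[OF _ A_nonneg s(1) s(4) T5]) simp
    show "(\<integral>\<^sup>+w. ennreal ((B 0 w $ j) powr s) \<partial>M) < \<infinity>" for j
      by (rule nn_integral_powr_less_top_mono[OF _ B_nonneg s(1) s(4) T6]) simp
  qed
  show ?thesis
  proof (intro allI)
    fix t i
    from summable AE_entry_eq_0_unless_prec[of i] AE_nonneg show "AE w in M. stat_sol A B t w $ i =
        (\<Sum>n. diag_prod A i t (t - int n + 1) w * D_term M A B (stat_sol A B) i (t - int n) w)"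
      by eventually_elim (rule stat_sol_eq_diag_series; auto)
  qed
qed

end
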